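(* Every finite tree is a compact visibility graph.
   Context: Given a family of pairwise disjoint nonempty connected subsets ("regions") of $\mathbb{R}^2$, a sightline is a closed line segment $\overline{ab}$ with $a\in A$, $b\in B$ for two different regions $A\neq B$ of the family, such that the segment intersects no region of the family other than $A$ and $B$. A graph $G$ is a compact visibility graph if there is such a family of compact connected nonempty regions, one for each vertex of $G$, such that two distinct vertices are adjacent in $G$ if and only if there is a sightline between their regions. *)

theory Defs
  imports "HOL-Analysis.Analysis"
begin

definition simple_graph :: "'v set \<Rightarrow> ('v \<Rightarrow> 'v \<Rightarrow> bool) \<Rightarrow> bool" where
  "simple_graph V E \<longleftrightarrow> finite V \<and> (\<forall>u v. E u v \<longrightarrow> u \<in> V \<and> v \<in> V)
     \<and> (\<forall>u v. E u v \<longrightarrow> E v u) \<and> (\<forall>v. \<not> E v v)"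

definition is_walk :: "'v set \<Rightarrow> ('v \<Rightarrow> 'v \<Rightarrow> bool) \<Rightarrow> 'v list \<Rightarrow> bool" where
  "is_walk V E xs \<longleftrightarrow> xs \<noteq> [] \<and> set xs \<subseteq> V \<and>
     (\<forall>i. Suc i < length xs \<longrightarrow> E (xs ! i) (xs ! Suc i))"

definition graph_connected :: "'v set \<Rightarrow> ('v \<Rightarrow> 'v \<Rightarrow> bool) \<Rightarrow> bool" where
  "graph_connected V E \<longleftrightarrow> (\<forall>u\<in>V. \<forall>v\<in>V. \<exists>xs. is_walk V E xs \<and> hd xs = u \<and> last xs = v)"

definition is_cycle :: "'v set \<Rightarrow> ('v \<Rightarrow> 'v \<Rightarrow> bool) \<Rightarrow> 'v list \<Rightarrow> bool" where
  "is_cycle V E xs \<longleftrightarrow> is_walk V E xs \<and> distinct xs \<and> length xs \<ge> 3 \<and> E (last xs) (hd xs)"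

definition is_tree :: "'v set \<Rightarrow> ('v \<Rightarrow> 'v \<Rightarrow> bool) \<Rightarrow> bool" where
  "is_tree V E \<longleftrightarrow> simple_graph V E \<and> V \<noteq> {} \<and> graph_connected V E \<and> (\<nexists>xs. is_cycle V E xs)"

definition sightline :: "'v set \<Rightarrow> ('v \<Rightarrow> (real^2) set) \<Rightarrow> 'v \<Rightarrow> 'v \<Rightarrow> real^2 \<Rightarrow> real^2 \<Rightarrow> bool" where
  "sightline V R u v a b \<longleftrightarrow> u \<in> V \<and> v \<in> V \<and> u \<noteq> v \<and> a \<in> R u \<and> b \<in> R v \<and>
     (\<forall>w\<in>V. w \<noteq> u \<and> w \<noteq> v \<longrightarrow> closed_segment a b \<inter> R w = {})"

definition compact_visibility_graph :: "'v set \<Rightarrow> ('v \<Rightarrow> 'v \<Rightarrow> bool) \<Rightarrow> bool" where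
  "compact_visibility_graph V E \<longleftrightarrow>
     (\<exists>R :: 'v \<Rightarrow> (real^2) set.
        (\<forall>v\<in>V. compact (R v) \<and> connected (R v) \<and> R v \<noteq> {}) \<and>
        (\<forall>u\<in>V. \<forall>v\<in>V. u \<noteq> v \<longrightarrow> R u \<inter> R v = {}) \<and>
        (\<forall>u\<in>V. \<forall>v\<in>V. u \<noteq> v \<longrightarrow> (E u v \<longleftrightarrow> (\<exists>a b. sightline V R u v a b))))"

end

(*
  Induction on the tree, removing a leaf. The induction hypothesis is strengthened: every
  vertex v also gets a port, an open disk around a point x v of its region in which the region
  lies left of x v; ports avoid all other regions, all other ports and one chosen sightline per
  edge, and they count as part of their vertex when non-edges are blocked.

  To attach a leaf l to p, draw the circle of radius r p / 4 through x p inside the right half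
  of the port of p and add it to the region of p; the region of l is a small disk inside this
  circle. The circle blocks every segment from l to anything outside it, a vertical segment
  joins l to the top of the circle, and the new ports of l and p are small disks around the
  rightmost points of l and of the circle.
*)
theory Submission
  imports Defs
begin

lemma is_walk_Cons_Cons:
  "is_walk V E (a # b # xs) \<longleftrightarrow> a \<in> V \<and> E a b \<and> is_walk V E (b # xs)"
  by (auto simp: is_walk_def nth_Cons split: nat.splits)

lemma is_walk_imp_rtranclp: "is_walk V E xs \<Longrightarrow> E\<^sup>*\<^sup>* (hd xs) (last xs)"
proof (induction xs rule: induct_list012)
  case (3 a b xs)
  then show ?case by (auto simp: is_walk_Cons_Cons intro: converse_rtranclp_into_rtranclp)
qed (auto simp: is_walk_def)

lemma rtranclp_imp_is_walk:
  assumes "simple_graph V E" "E\<^sup>*\<^sup>* u v" "u \<in> V"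
  shows "\<exists>xs. is_walk V E xs \<and> hd xs = u \<and> last xs = v"
  using assms(2,3)
proof (induction rule: converse_rtranclp_induct)
  case base
  then show ?case by (intro exI[of _ "[v]"]) (simp add: is_walk_def)
next
  case (step a b)
  then have "b \<in> V" using assms(1) by (auto simp: simple_graph_def)
  then obtain xs where xs: "is_walk V E xs" "hd xs = b" "last xs = v" using step.IH by blast
  then obtain ys where "xs = b # ys" by (cases xs) (auto simp: is_walk_def)
  then show ?case using xs step by (intro exI[of _ "a # xs"]) (auto simp: is_walk_Cons_Cons)
qed

lemma graph_connected_iff_rtranclp:
  "simple_graph V E \<Longrightarrow> graph_connected V E \<longleftrightarrow> (\<forall>u\<in>V. \<forall>v\<in>V. E\<^sup>*\<^sup>* u v)"
  unfolding graph_connected_def by (metis is_walk_imp_rtranclp rtranclp_imp_is_walk)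

lemma is_walk_mono:
  "is_walk V E xs \<Longrightarrow> V \<subseteq> W \<Longrightarrow> (\<And>a b. E a b \<Longrightarrow> F a b) \<Longrightarrow> is_walk W F xs"
  by (auto simp: is_walk_def)

lemma is_walk_take: "is_walk V E xs \<Longrightarrow> 0 < n \<Longrightarrow> is_walk V E (take n xs)"
  by (auto simp: is_walk_def dest: in_set_takeD)

lemma longest_path_exists:
  assumes "finite V" "is_walk V E xs" "distinct xs"
  obtains ys where "is_walk V E ys" "distinct ys"
    "\<And>zs. is_walk V E zs \<Longrightarrow> distinct zs \<Longrightarrow> length zs \<le> length ys"
proof -
  let ?len = "\<lambda>k. \<exists>ys. is_walk V E ys \<and> distinct ys \<and> length ys = k"
  have "length ys \<le> card V" if "is_walk V E ys" "distinct ys" for ys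
    using that assms(1) by (metis card_mono distinct_card is_walk_def)
  then obtain m where "?len m" "\<And>k. ?len k \<Longrightarrow> k \<le> m"
    using Nat.ex_has_greatest_nat[of ?len "length xs" "card V"] assms(2,3) by blast
  then show thesis using that by blast
qed

lemma acyclic_longest_path_starts_at_leaf:
  assumes "simple_graph V E" "\<nexists>cs. is_cycle V E cs"
    and path: "is_walk V E (l # p # zs)" "distinct (l # p # zs)"
    and longest: "\<And>ys. is_walk V E ys \<Longrightarrow> distinct ys \<Longrightarrow> length ys \<le> length (l # p # zs)"
    and "E l w"
  shows "w = p"
proof (rule ccontr)
  assume "w \<noteq> p"
  let ?ps = "l # p # zs"
  have "w \<in> V" "w \<noteq> l" using assms(1) \<open>E l w\<close> by (auto simp: simple_graph_def)
  show False
  proof (cases "w \<in> set ?ps")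
    case False
    have "is_walk V E (w # ?ps)"
      using path \<open>E l w\<close> \<open>w \<in> V\<close> assms(1) by (auto simp: is_walk_Cons_Cons simple_graph_def)
    then show False using longest[of "w # ?ps"] path(2) False by simp
  next
    case True
    then obtain j where j: "j < length ?ps" "?ps ! j = w" by (meson in_set_conv_nth)
    with \<open>w \<noteq> p\<close> \<open>w \<noteq> l\<close> have "2 \<le> j" by (cases j; cases "j - 1") auto
    \<comment> \<open>the path up to \<open>w\<close> closes up to a cycle through the edge \<open>w l\<close>\<close>
    let ?cs = "take (Suc j) ?ps"
    have "last ?cs = w" using j by (simp only: take_Suc_conv_app_nth) simp
    moreover have "hd ?cs = l" by simp
    moreover have "E w l" using \<open>E l w\<close> assms(1) by (simp add: simple_graph_def)
    moreover have "is_walk V E ?cs" using is_walk_take[OF path(1)] by blast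
    moreover have "distinct ?cs" using distinct_take[OF path(2)] by blast
    moreover have "3 \<le> length ?cs" using j \<open>2 \<le> j\<close> by simp
    ultimately have "is_cycle V E ?cs" unfolding is_cycle_def by metis
    then show False using assms(2) by blast
  qed
qed

lemma tree_has_leaf:
  assumes "is_tree V E" "2 \<le> card V"
  obtains l p where "E l p" "\<And>w. E l w \<Longrightarrow> w = p"
proof -
  have sg: "simple_graph V E" and acyclic: "\<nexists>cs. is_cycle V E cs"
    and conn: "\<forall>u\<in>V. \<forall>v\<in>V. E\<^sup>*\<^sup>* u v"
    using assms(1) graph_connected_iff_rtranclp by (auto simp: is_tree_def)
  have "finite V" using sg by (simp add: simple_graph_def)
  have "\<not> card V \<le> Suc 0" using assms(2) by simp
  then obtain u v where "u \<in> V" "v \<in> V" "u \<noteq> v"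
    unfolding card_le_Suc0_iff_eq[OF \<open>finite V\<close>] by blast
  then obtain w where "E u w" using conn by (metis converse_rtranclpE)
  then have "is_walk V E [u, w]" "distinct [u, w]"
    using sg by (auto simp: is_walk_def simple_graph_def)
  then obtain ys where ys: "is_walk V E ys" "distinct ys"
    and longest: "\<And>zs. is_walk V E zs \<Longrightarrow> distinct zs \<Longrightarrow> length zs \<le> length ys"
    using longest_path_exists[OF \<open>finite V\<close>] by blast
  have "2 \<le> length ys" using longest[OF \<open>is_walk V E [u, w]\<close> \<open>distinct [u, w]\<close>] by simp
  then obtain l p zs where lpzs: "ys = l # p # zs" by (cases ys; cases "tl ys") auto
  show thesis
  proof
    show "E l p" using ys(1) by (simp add: lpzs is_walk_Cons_Cons)
    show "w = p" if "E l w" for w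
      using acyclic_longest_path_starts_at_leaf[OF sg acyclic] ys longest that
      unfolding lpzs by blast
  qed
qed

lemma tree_delete_leaf:
  assumes tree: "is_tree V E" and "E l p" and leaf: "\<And>w. E l w \<Longrightarrow> w = p"
  shows "is_tree (V - {l}) (\<lambda>u w. E u w \<and> u \<noteq> l \<and> w \<noteq> l)" (is "is_tree ?V ?E")
proof -
  have sg: "simple_graph V E" and acyclic: "\<nexists>cs. is_cycle V E cs"
    and conn: "\<forall>u\<in>V. \<forall>v\<in>V. E\<^sup>*\<^sup>* u v"
    using tree graph_connected_iff_rtranclp by (auto simp: is_tree_def)
  have sg': "simple_graph ?V ?E" using sg by (auto simp: simple_graph_def)
  have "p \<in> V" "l \<noteq> p" using sg \<open>E l p\<close> by (auto simp: simple_graph_def)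
  have "?E\<^sup>*\<^sup>* u v" if "u \<in> ?V" "v \<in> ?V" for u v
  proof -
    \<comment> \<open>a walk in the tree can only leave \<open>p\<close> for the leaf \<open>l\<close> and return to \<open>p\<close> right away\<close>
    have "E\<^sup>*\<^sup>* u v" using conn that by blast
    then have "if v = l then ?E\<^sup>*\<^sup>* u p else ?E\<^sup>*\<^sup>* u v"
    proof (induction rule: rtranclp_induct)
      case (step a b)
      have "E b a" using step.hyps(2) sg by (simp add: simple_graph_def)
      consider "a = l" | "b = l" | "a \<noteq> l" "b \<noteq> l" by blast
      then show ?case
      proof cases
        case 1
        then show ?thesis using step leaf[OF step.hyps(2)[unfolded 1]] \<open>l \<noteq> p\<close> by simp
      next
        case 2
        then show ?thesis using step leaf[OF \<open>E b a\<close>[unfolded 2]] \<open>l \<noteq> p\<close> by simp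
      next
        case 3
        then show ?thesis using step by (simp add: rtranclp.rtrancl_into_rtrancl)
      qed
    qed (use that in simp)
    then show ?thesis using that by simp
  qed
  then have "graph_connected ?V ?E" using graph_connected_iff_rtranclp[OF sg'] by blast
  moreover have "\<nexists>cs. is_cycle ?V ?E cs"
  proof
    assume "\<exists>cs. is_cycle ?V ?E cs"
    then obtain cs where "is_cycle ?V ?E cs" ..
    then have "is_cycle V E cs" using is_walk_mono[of ?V ?E cs V E] by (auto simp: is_cycle_def)
    with acyclic show False by blast
  qed
  moreover have "?V \<noteq> {}" using \<open>p \<in> V\<close> \<open>l \<noteq> p\<close> by blast
  ultimately show ?thesis using sg' by (simp add: is_tree_def)
qed

lemma tree_induct [consumes 1, case_names singleton add_leaf]:
  assumes "is_tree V E"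
    and singleton: "\<And>v. P {v} (\<lambda>_ _. False)"
    and add_leaf: "\<And>V E l p. is_tree V E \<Longrightarrow> l \<in> V \<Longrightarrow> p \<in> V \<Longrightarrow> l \<noteq> p \<Longrightarrow> E l p \<Longrightarrow>
      (\<And>w. E l w \<Longrightarrow> w = p) \<Longrightarrow> P (V - {l}) (\<lambda>u w. E u w \<and> u \<noteq> l \<and> w \<noteq> l) \<Longrightarrow> P V E"
  shows "P V E"
  using assms(1)
proof (induction "card V" arbitrary: V E rule: less_induct)
  case less
  have sg: "simple_graph V E" and "V \<noteq> {}" using less.prems by (auto simp: is_tree_def)
  then have "finite V" "card V \<noteq> 0" by (auto simp: simple_graph_def)
  show ?case
  proof (cases "2 \<le> card V")
    case False
    then have "card V = 1" using \<open>card V \<noteq> 0\<close> by linarith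
    then obtain v where "V = {v}" by (rule card_1_singletonE)
    moreover have "E = (\<lambda>_ _. False)"
      using sg \<open>V = {v}\<close> unfolding simple_graph_def by (metis singletonD)
    ultimately show ?thesis using singleton by simp
  next
    case True
    then obtain l p where lp: "E l p" and leaf: "\<And>w. E l w \<Longrightarrow> w = p"
      using tree_has_leaf[OF less.prems] by blast
    have "l \<in> V" "p \<in> V" "l \<noteq> p" using lp sg by (auto simp: simple_graph_def)
    have "card (V - {l}) < card V" using \<open>finite V\<close> \<open>l \<in> V\<close> by (rule card_Diff1_less)
    then have "P (V - {l}) (\<lambda>u w. E u w \<and> u \<noteq> l \<and> w \<noteq> l)"
      using less.hyps tree_delete_leaf[OF less.prems lp leaf] by blast
    then show ?thesis using add_leaf[OF less.prems \<open>l \<in> V\<close> \<open>p \<in> V\<close> \<open>l \<noteq> p\<close> lp leaf] by blast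
  qed
qed

lemma cball_component_bounds:
  fixes y z :: "real^'n"
  assumes "y \<in> cball z t"
  shows "z $ i - t \<le> y $ i \<and> y $ i \<le> z $ i + t"
  using component_le_norm_cart[of "y - z" i] assms
  by (simp add: dist_norm norm_minus_commute abs_le_iff)

lemma ball_component_bounds:
  fixes y z :: "real^'n"
  assumes "y \<in> ball z t"
  shows "z $ i - t < y $ i \<and> y $ i < z $ i + t"
  using component_le_norm_cart[of "y - z" i] assms
  by (simp add: dist_norm norm_minus_commute abs_le_iff)

lemma closed_segment_component_const:
  fixes a b :: "real^'n"
  assumes "a $ i = b $ i" "y \<in> closed_segment a b"
  shows "y $ i = a $ i"
proof -
  obtain u where "y = (1 - u) *\<^sub>R a + u *\<^sub>R b" using assms(2) by (auto simp: in_segment)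
  then have "y $ i = (1 - u) * a $ i + u * b $ i" by simp
  then show ?thesis using assms(1) by (simp add: algebra_simps)
qed

lemma closed_segment_meets_sphere:
  fixes a b c :: "'a::euclidean_space"
  assumes "dist c a \<le> s" "s < dist c b"
  shows "closed_segment a b \<inter> sphere c s \<noteq> {}"
proof -
  have "closed_segment a b \<inter> frontier (cball c s) \<noteq> {}"
    by (rule connected_Int_frontier) (use assms in auto)
  then show ?thesis by simp
qed

lemma sightline_commute: "sightline V R u w a b \<longleftrightarrow> sightline V R w u b a"
  by (auto simp: sightline_def closed_segment_commute)

abbreviation padded_region ::
    "('v \<Rightarrow> (real^2) set) \<Rightarrow> ('v \<Rightarrow> real^2) \<Rightarrow> ('v \<Rightarrow> real) \<Rightarrow> 'v \<Rightarrow> (real^2) set"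
  where "padded_region R x r v \<equiv> R v \<union> ball (x v) (r v)"

locale ported_representation =
  fixes V :: "'v set" and E :: "'v \<Rightarrow> 'v \<Rightarrow> bool"
    and R :: "'v \<Rightarrow> (real^2) set" and x :: "'v \<Rightarrow> real^2" and r :: "'v \<Rightarrow> real"
  assumes compact_region: "v \<in> V \<Longrightarrow> compact (R v)"
    and connected_region: "v \<in> V \<Longrightarrow> connected (R v)"
    and port_center_in_region: "v \<in> V \<Longrightarrow> x v \<in> R v"
    and port_radius_pos: "v \<in> V \<Longrightarrow> 0 < r v"
    and region_left_in_port: "v \<in> V \<Longrightarrow> y \<in> R v \<Longrightarrow> y \<in> ball (x v) (r v) \<Longrightarrow> y $ 1 \<le> x v $ 1"
    and padded_regions_disjoint:
      "u \<in> V \<Longrightarrow> w \<in> V \<Longrightarrow> u \<noteq> w \<Longrightarrow> padded_region R x r u \<inter> padded_region R x r w = {}"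
    and edge_sightline: "u \<in> V \<Longrightarrow> w \<in> V \<Longrightarrow> u \<noteq> w \<Longrightarrow> E u w \<Longrightarrow>
      \<exists>a b. sightline V R u w a b \<and> (\<forall>z\<in>V. closed_segment a b \<inter> ball (x z) (r z) = {})"
    and non_edge_blocked: "u \<in> V \<Longrightarrow> w \<in> V \<Longrightarrow> u \<noteq> w \<Longrightarrow> \<not> E u w \<Longrightarrow>
      a \<in> padded_region R x r u \<Longrightarrow> b \<in> padded_region R x r w \<Longrightarrow>
      \<exists>z\<in>V. z \<noteq> u \<and> z \<noteq> w \<and> closed_segment a b \<inter> R z \<noteq> {}"
begin

lemma compact_visibility_graph: "compact_visibility_graph V E"
  unfolding compact_visibility_graph_def
proof (intro exI[of _ R] conjI ballI impI)
  fix v assume "v \<in> V"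
  then show "compact (R v)" "connected (R v)" "R v \<noteq> {}"
    using compact_region connected_region port_center_in_region by auto
next
  fix u w assume "u \<in> V" "w \<in> V" "u \<noteq> w"
  then show "R u \<inter> R w = {}" using padded_regions_disjoint by blast
  show "E u w \<longleftrightarrow> (\<exists>a b. sightline V R u w a b)"
  proof
    assume "\<exists>a b. sightline V R u w a b"
    then obtain a b where ab: "sightline V R u w a b" by blast
    show "E u w"
    proof (rule ccontr)
      assume "\<not> E u w"
      with ab obtain z where "z \<in> V" "z \<noteq> u" "z \<noteq> w" "closed_segment a b \<inter> R z \<noteq> {}"
        using non_edge_blocked[OF \<open>u \<in> V\<close> \<open>w \<in> V\<close> \<open>u \<noteq> w\<close>] by (auto simp: sightline_def)
      with ab show False by (auto simp: sightline_def)
    qed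
  qed (use edge_sightline \<open>u \<in> V\<close> \<open>w \<in> V\<close> \<open>u \<noteq> w\<close> in blast)
qed

lemma padded_region_disjoint_port:
  "w \<in> V \<Longrightarrow> p \<in> V \<Longrightarrow> w \<noteq> p \<Longrightarrow> padded_region R x r w \<inter> ball (x p) (r p) = {}"
  using padded_regions_disjoint[of w p] by blast

end

lemma ported_representation_singleton:
  "ported_representation {v} (\<lambda>_ _. False) (\<lambda>_. {0}) (\<lambda>_. 0) (\<lambda>_. 1)"
  by unfold_locales auto

locale leaf_extension = ported_representation +
  fixes F :: "'v \<Rightarrow> 'v \<Rightarrow> bool" and l p :: 'v
  assumes parent_in: "p \<in> V" and leaf_notin: "l \<notin> V"
    and F_old: "u \<in> V \<Longrightarrow> w \<in> V \<Longrightarrow> F u w \<longleftrightarrow> E u w"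
    and F_leaf: "w \<in> V \<Longrightarrow> F l w \<longleftrightarrow> w = p" "w \<in> V \<Longrightarrow> F w l \<longleftrightarrow> w = p"
begin

definition ring_radius :: real where "ring_radius = r p / 4"

definition ring_center :: "real^2" where "ring_center = x p + ring_radius *\<^sub>R axis 1 1"

definition new_region :: "'v \<Rightarrow> (real^2) set" where
  "new_region v = (if v = l then cball ring_center (ring_radius / 4)
     else if v = p then R p \<union> sphere ring_center ring_radius else R v)"

definition new_port_center :: "'v \<Rightarrow> real^2" where
  "new_port_center v = (if v = l then ring_center + (ring_radius / 4) *\<^sub>R axis 1 1
     else if v = p then ring_center + ring_radius *\<^sub>R axis 1 1 else x v)"

definition new_port_radius :: "'v \<Rightarrow> real" where
  "new_port_radius v = (if v = l then ring_radius / 16 else if v = p then ring_radius / 2 else r v)"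

abbreviation new_padded_region :: "'v \<Rightarrow> (real^2) set" where
  "new_padded_region \<equiv> padded_region new_region new_port_center new_port_radius"

lemma leaf_neq_parent: "l \<noteq> p"
  using parent_in leaf_notin by blast

lemma ring_radius_pos: "0 < ring_radius"
  using port_radius_pos[OF parent_in] by (simp add: ring_radius_def)

lemma ring_center_component: "ring_center $ 1 = x p $ 1 + ring_radius"
  by (simp add: ring_center_def)

lemma dist_port_center_ring_center: "dist (x p) ring_center = ring_radius"
  using ring_radius_pos by (simp add: ring_center_def dist_norm)

lemma ring_disk_subset_port: "cball ring_center ring_radius \<subseteq> ball (x p) (r p)"
  using dist_port_center_ring_center ring_radius_pos
  by (simp add: cball_subset_ball_iff dist_commute ring_radius_def)

lemma inner_disk_disjoint_region: "ball ring_center (ring_radius / 2) \<inter> R p = {}"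
proof -
  have "x p $ 1 < y $ 1" if "y \<in> ball ring_center (ring_radius / 2)" for y
    using ball_component_bounds[OF that, of 1] ring_center_component by linarith
  moreover have "ball ring_center (ring_radius / 2) \<subseteq> ball (x p) (r p)"
    using ring_disk_subset_port ring_radius_pos by auto
  ultimately show ?thesis using region_left_in_port[OF parent_in] by fastforce
qed


lemma new_padded_leaf_subset: "new_padded_region l \<subseteq> ball ring_center (ring_radius / 2)"
proof -
  have "cball ring_center (ring_radius / 4) \<subseteq> ball ring_center (ring_radius / 2)"
    using ring_radius_pos by (simp add: cball_subset_ball_iff)
  moreover have "ball (ring_center + (ring_radius / 4) *\<^sub>R axis 1 1) (ring_radius / 16)
      \<subseteq> ball ring_center (ring_radius / 2)"
    using ring_radius_pos by (simp add: ball_subset_ball_iff dist_norm)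
  ultimately show ?thesis by (simp add: new_region_def new_port_center_def new_port_radius_def)
qed

lemma new_padded_leaf_subset_port: "new_padded_region l \<subseteq> ball (x p) (r p)"
proof -
  have "ball ring_center (ring_radius / 2) \<subseteq> cball ring_center ring_radius"
    using ring_radius_pos by auto
  then show ?thesis using new_padded_leaf_subset ring_disk_subset_port by blast
qed

lemma inner_disk_disjoint_new_padded_parent:
  "ball ring_center (ring_radius / 2) \<inter> new_padded_region p = {}"
proof -
  have "ball ring_center (ring_radius / 2) \<inter> sphere ring_center ring_radius = {}"
    using ring_radius_pos by auto
  moreover have "ball ring_center (ring_radius / 2)
      \<inter> ball (ring_center + ring_radius *\<^sub>R axis 1 1) (ring_radius / 2) = {}"
    using ring_radius_pos by (intro disjoint_ballI) (simp add: dist_norm)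
  ultimately show ?thesis using inner_disk_disjoint_region leaf_neq_parent
    by (auto simp: new_region_def new_port_center_def new_port_radius_def)
qed

lemma ring_subset_port: "sphere ring_center ring_radius \<subseteq> ball (x p) (r p)"
  using ring_disk_subset_port sphere_cball by blast

lemma new_region_subset: "v \<in> V \<Longrightarrow> new_region v \<subseteq> R v \<union> ball (x p) (r p)"
  using ring_subset_port leaf_notin by (auto simp: new_region_def)

lemma new_port_subset:
  assumes "v \<in> V"
  shows "ball (new_port_center v) (new_port_radius v) \<subseteq> ball (x v) (r v)"
proof -
  have "ring_center + ring_radius *\<^sub>R axis 1 1 = x p + (2 * ring_radius) *\<^sub>R axis 1 1"
    by (simp add: ring_center_def add.assoc flip: scaleR_add_left)
  then have "dist (x p) (ring_center + ring_radius *\<^sub>R axis 1 1) = 2 * ring_radius"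
    using ring_radius_pos by (simp add: dist_norm)
  then have "ball (ring_center + ring_radius *\<^sub>R axis 1 1) (ring_radius / 2) \<subseteq> ball (x p) (r p)"
    using ring_radius_pos by (simp add: ball_subset_ball_iff dist_commute ring_radius_def)
  then show ?thesis using assms leaf_notin
    by (auto simp: new_port_center_def new_port_radius_def)
qed


lemma new_padded_subset:
  assumes "v \<in> V"
  shows "new_padded_region v \<subseteq> padded_region R x r v"
proof (cases "v = p")
  case True
  then show ?thesis using new_region_subset new_port_subset assms by blast
next
  case False
  then show ?thesis using new_port_subset assms leaf_notin by (auto simp: new_region_def)
qed

lemma new_padded_regions_disjoint:
  assumes "u \<in> insert l V" "w \<in> insert l V" "u \<noteq> w"
  shows "new_padded_region u \<inter> new_padded_region w = {}"
proof -
  have leaf: "new_padded_region l \<inter> new_padded_region v = {}" if "v \<in> V" for v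
  proof (cases "v = p")
    case True
    then show ?thesis using new_padded_leaf_subset inner_disk_disjoint_new_padded_parent by blast
  next
    case False
    then show ?thesis
      using new_padded_leaf_subset_port new_padded_subset[OF that]
        padded_region_disjoint_port[OF that parent_in False] by blast
  qed
  consider "u = l" "w \<in> V" | "w = l" "u \<in> V" | "u \<in> V" "w \<in> V" using assms by blast
  then show ?thesis
  proof cases
    case 3
    then show ?thesis
      using new_padded_subset padded_regions_disjoint[OF 3 assms(3)] by blast
  qed (use leaf in blast)+
qed

lemma new_region_left_in_port:
  assumes "v \<in> insert l V" "y \<in> new_region v" "y \<in> ball (new_port_center v) (new_port_radius v)"
  shows "y $ 1 \<le> new_port_center v $ 1"
proof -
  consider "v = l" | "v = p" "y \<in> R p" | "v = p" "y \<in> sphere ring_center ring_radius"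
    | "v \<in> V" "v \<noteq> p"
    using assms(1,2) leaf_neq_parent by (cases "v = l"; cases "v = p") (auto simp: new_region_def)
  then show ?thesis
  proof cases
    case 1
    then show ?thesis
      using assms cball_component_bounds[of y ring_center _ 1]
      by (simp add: new_region_def new_port_center_def)
  next
    case 2
    then have "y $ 1 \<le> x p $ 1"
      using assms(3) new_port_subset[OF parent_in] region_left_in_port[OF parent_in] by blast
    then show ?thesis
      using 2 ring_radius_pos leaf_neq_parent
      by (simp add: new_port_center_def ring_center_component)
  next
    case 3
    then show ?thesis
      using cball_component_bounds[of y ring_center ring_radius 1] leaf_neq_parent
      by (simp add: new_port_center_def)
  next
    case 4
    then have "v \<noteq> l" using leaf_notin by blast
    then show ?thesis using 4 assms region_left_in_port
      by (simp add: new_region_def new_port_center_def new_port_radius_def)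
  qed
qed

lemma compact_new_region: "v \<in> insert l V \<Longrightarrow> compact (new_region v)"
  using compact_region parent_in by (auto simp: new_region_def)

lemma connected_new_region:
  assumes "v \<in> insert l V"
  shows "connected (new_region v)"
proof -
  have "x p \<in> R p \<inter> sphere ring_center ring_radius"
    using dist_port_center_ring_center port_center_in_region[OF parent_in]
    by (simp add: dist_commute)
  then have "connected (R p \<union> sphere ring_center ring_radius)"
    using connected_region[OF parent_in] ring_radius_pos
    by (intro connected_Un) (auto simp: connected_sphere)
  then show ?thesis using assms connected_region by (auto simp: new_region_def)
qed

lemma new_port_center_in_new_region: "v \<in> insert l V \<Longrightarrow> new_port_center v \<in> new_region v"
  using ring_radius_pos leaf_neq_parent port_center_in_region
  by (auto simp: new_region_def new_port_center_def dist_norm)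

lemma new_port_radius_pos: "v \<in> insert l V \<Longrightarrow> 0 < new_port_radius v"
  using ring_radius_pos port_radius_pos by (auto simp: new_port_radius_def)

lemma leaf_sightline:
  "\<exists>a b. sightline (insert l V) new_region l p a b
     \<and> (\<forall>z\<in>insert l V. closed_segment a b \<inter> ball (new_port_center z) (new_port_radius z) = {})"
proof (intro exI conjI)
  define a where "a = ring_center + (ring_radius / 4) *\<^sub>R axis 2 1"
  define b where "b = ring_center + ring_radius *\<^sub>R axis 2 1"
  have "a \<in> new_region l" "b \<in> new_region p"
    using ring_radius_pos leaf_neq_parent by (simp_all add: a_def b_def new_region_def dist_norm)
  have segment_in_disk: "closed_segment a b \<subseteq> cball ring_center ring_radius"
    using ring_radius_pos by (intro closed_segment_subset) (auto simp: a_def b_def dist_norm)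
  then have segment_in_port: "closed_segment a b \<subseteq> ball (x p) (r p)"
    using ring_disk_subset_port by blast
  \<comment> \<open>the sightline is vertical, while the new ports lie strictly to its right\<close>
  have vertical: "y $ 1 = ring_center $ 1" if "y \<in> closed_segment a b" for y
    using closed_segment_component_const[OF _ that] by (simp add: a_def b_def axis_def)
  have "closed_segment a b \<inter> ball (new_port_center z) (new_port_radius z) = {}"
    if z: "z \<in> insert l V" for z
  proof -
    consider "z = l" | "z = p" | "z \<in> V" "z \<noteq> p" using z by blast
    then show ?thesis
    proof cases
      case 3
      then show ?thesis
        using segment_in_port new_port_subset padded_region_disjoint_port[OF 3(1) parent_in 3(2)]
        by blast
    qed (use vertical ball_component_bounds[of _ _ _ 1] ring_radius_pos leaf_neq_parent in
        \<open>fastforce simp: new_port_center_def new_port_radius_def\<close>)+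
  qed
  then show "\<forall>z\<in>insert l V. closed_segment a b \<inter> ball (new_port_center z) (new_port_radius z) = {}"
    by blast
  have "closed_segment a b \<inter> new_region z = {}" if "z \<in> V" "z \<noteq> p" for z
    using that segment_in_port padded_region_disjoint_port[OF that(1) parent_in that(2)] leaf_notin
    by (auto simp: new_region_def)
  then show "sightline (insert l V) new_region l p a b"
    using \<open>a \<in> new_region l\<close> \<open>b \<in> new_region p\<close> parent_in leaf_neq_parent
    by (auto simp: sightline_def)
qed

lemma region_subset_new_region: "v \<in> V \<Longrightarrow> R v \<subseteq> new_region v"
  using leaf_notin by (auto simp: new_region_def)

lemma old_edge_sightline:
  assumes "u \<in> V" "w \<in> V" "u \<noteq> w" "E u w"
  shows "\<exists>a b. sightline (insert l V) new_region u w a b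
     \<and> (\<forall>z\<in>insert l V. closed_segment a b \<inter> ball (new_port_center z) (new_port_radius z) = {})"
proof -
  obtain a b where ab: "sightline V R u w a b"
    and avoids_ports: "\<forall>z\<in>V. closed_segment a b \<inter> ball (x z) (r z) = {}"
    using edge_sightline[OF assms] by blast
  have avoids_parent_port: "closed_segment a b \<inter> ball (x p) (r p) = {}"
    using avoids_ports parent_in by blast
  show ?thesis
  proof (intro exI conjI ballI)
    fix z assume "z \<in> insert l V"
    then show "closed_segment a b \<inter> ball (new_port_center z) (new_port_radius z) = {}"
      using avoids_ports avoids_parent_port new_port_subset new_padded_leaf_subset_port by blast
  next
    have "closed_segment a b \<inter> new_region z = {}" if z: "z \<in> insert l V" "z \<noteq> u" "z \<noteq> w" for z
    proof (cases "z = l")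
      case True
      then show ?thesis using avoids_parent_port new_padded_leaf_subset_port by blast
    next
      case False
      then have "closed_segment a b \<inter> R z = {}" using z ab by (auto simp: sightline_def)
      then show ?thesis using new_region_subset[of z] z False avoids_parent_port by blast
    qed
    then show "sightline (insert l V) new_region u w a b"
      using ab region_subset_new_region assms(1,2) by (auto simp: sightline_def)
  qed
qed

lemma new_edge_sightline:
  assumes "u \<in> insert l V" "w \<in> insert l V" "u \<noteq> w" "F u w"
  shows "\<exists>a b. sightline (insert l V) new_region u w a b
     \<and> (\<forall>z\<in>insert l V. closed_segment a b \<inter> ball (new_port_center z) (new_port_radius z) = {})"
proof -
  consider "u = l" "w = p" | "u = p" "w = l" | "u \<in> V" "w \<in> V" "E u w"
    using assms F_old F_leaf by blast
  then show ?thesis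
  proof cases
    case 2
    then show ?thesis
      using leaf_sightline by (metis closed_segment_commute sightline_commute)
  qed (use leaf_sightline old_edge_sightline assms(3) in blast)+
qed

lemma leaf_blocked_by_ring:
  assumes "w \<in> V" "w \<noteq> p" "a \<in> new_padded_region l" "b \<in> new_padded_region w"
  shows "closed_segment a b \<inter> new_region p \<noteq> {}"
proof -
  have "dist ring_center a \<le> ring_radius"
    using assms(3) new_padded_leaf_subset ring_radius_pos by auto
  moreover have "b \<notin> cball ring_center ring_radius"
    using assms new_padded_subset ring_disk_subset_port
      padded_region_disjoint_port[OF assms(1) parent_in]
    by blast
  ultimately have "closed_segment a b \<inter> sphere ring_center ring_radius \<noteq> {}"
    by (intro closed_segment_meets_sphere) auto
  then show ?thesis using leaf_neq_parent by (auto simp: new_region_def)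
qed

lemma new_non_edge_blocked:
  assumes "u \<in> insert l V" "w \<in> insert l V" "u \<noteq> w" "\<not> F u w"
    and "a \<in> new_padded_region u" "b \<in> new_padded_region w"
  shows "\<exists>z\<in>insert l V. z \<noteq> u \<and> z \<noteq> w \<and> closed_segment a b \<inter> new_region z \<noteq> {}"
proof -
  consider "u = l" "w \<in> V" "w \<noteq> p" | "w = l" "u \<in> V" "u \<noteq> p" | "u \<in> V" "w \<in> V" "\<not> E u w"
    using assms(1-4) F_old F_leaf by blast
  then show ?thesis
  proof cases
    case 1
    then have "closed_segment a b \<inter> new_region p \<noteq> {}"
      using leaf_blocked_by_ring assms(5,6) by blast
    then show ?thesis using 1 parent_in leaf_neq_parent by (intro bexI[of _ p]) auto
  next
    case 2
    then show ?thesis using leaf_blocked_by_ring[of u b a] assms(5,6) parent_in leaf_neq_parent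
      by (metis closed_segment_commute insertI2)
  next
    case 3
    then show ?thesis
      using non_edge_blocked[OF 3(1,2) assms(3) 3(3)] assms(5,6)
        new_padded_subset region_subset_new_region
      by blast
  qed
qed

theorem ported_representation_add_leaf:
  "ported_representation (insert l V) F new_region new_port_center new_port_radius"
  by unfold_locales
    (fact compact_new_region connected_new_region new_port_center_in_new_region new_port_radius_pos
      new_region_left_in_port new_padded_regions_disjoint new_edge_sightline new_non_edge_blocked)+

end

lemma tree_ported_representation:
  assumes "is_tree V E"
  shows "\<exists>R x r. ported_representation V E R x r"
  using assms
proof (induction rule: tree_induct)
  case (singleton v)
  show ?case by (intro exI) (rule ported_representation_singleton)
next
  case (add_leaf V E l p)
  then obtain R x r where rep: "ported_representation (V - {l}) (\<lambda>u w. E u w \<and> u \<noteq> l \<and> w \<noteq> l) R x r"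
    by blast
  have "E l w \<longleftrightarrow> w = p" "E w l \<longleftrightarrow> w = p" for w
    using add_leaf.hyps(1,5,6) unfolding is_tree_def simple_graph_def by blast+
  then interpret leaf_extension "V - {l}" "\<lambda>u w. E u w \<and> u \<noteq> l \<and> w \<noteq> l" R x r E l p
    by (intro leaf_extension.intro[OF rep] leaf_extension_axioms.intro)
      (use add_leaf.hyps(3,4) in auto)
  have "insert l (V - {l}) = V" using add_leaf.hyps(2) by blast
  then show ?case using ported_representation_add_leaf by metis
qed

theorem corollary2:
  fixes V :: "'v set" and E :: "'v \<Rightarrow> 'v \<Rightarrow> bool"
  assumes "is_tree V E"
  shows "compact_visibility_graph V E"
proof -
  obtain R x r where "ported_representation V E R x r"
    using tree_ported_representation[OF assms] by blast
  then show ?thesis by (rule ported_representation.compact_visibility_graph)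
qed

end
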